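(* Let $N$ be a proper metric space which admits dilations and let $N'$ be a uniformly discrete metric space which is quasi-isometric to $N$. If, for all $R>0$, there is a radially sublinear cover of $N'$ with $R$-multiplicity at most $k$, then $k\geq\dim_{\mathrm{top}}(N)+1$.
   Context: $N$ admits dilations if for some $\lambda\neq1$ there is a bijection $\psi:N\to N$ with $d(\psi(x),\psi(x'))=\lambda d(x,x')$ for all $x,x'$. Uniformly discrete: $d(x,y)\geq1$ for $x\neq y$. A cover $\mathcal U$ of $N'$ is radially sublinear if there is $a\in N'$ with $\lim_{m\to\infty}\frac1m\max\{\diam(U):U\in\mathcal U,\ d(a,U)\leq m\}=0$. A cover has $R$-multiplicity at most $k$ if every closed ball of radius $R$ meets at most $k$ elements of the cover. $\dim_{\mathrm{top}}$ is the topological covering dimension. *)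

theory Defs
  imports "HOL-Analysis.Analysis"
begin

definition proper_metric :: "'a::metric_space itself \<Rightarrow> bool" where
  "proper_metric _ \<longleftrightarrow> (\<forall>(x::'a) r. compact (cball x r))"

definition admits_dilations :: "'a::metric_space itself \<Rightarrow> bool" where
  "admits_dilations _ \<longleftrightarrow> (\<exists>lam::real. lam \<noteq> 1 \<and> (\<exists>\<psi>::'a \<Rightarrow> 'a. bij \<psi> \<and>
      (\<forall>x x'. dist (\<psi> x) (\<psi> x') = lam * dist x x')))"

definition uniformly_discrete :: "'a::metric_space itself \<Rightarrow> bool" where
  "uniformly_discrete _ \<longleftrightarrow> (\<forall>x y::'a. x \<noteq> y \<longrightarrow> dist x y \<ge> 1)"

definition quasi_isometric :: "'a::metric_space itself \<Rightarrow> 'b::metric_space itself \<Rightarrow> bool" where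
  "quasi_isometric _ _ \<longleftrightarrow> (\<exists>(f::'a \<Rightarrow> 'b) (L::real) (C::real). L \<ge> 1 \<and> C \<ge> 0 \<and>
      (\<forall>x y. dist x y / L - C \<le> dist (f x) (f y) \<and> dist (f x) (f y) \<le> L * dist x y + C) \<and>
      (\<forall>z. \<exists>x. dist z (f x) \<le> C))"

text \<open>Radially sublinear cover: the maximal diameter of members within distance m of a
  base point a is o(m).  Unbounded members count as having infinite diameter.\<close>
definition radially_sublinear :: "'b::metric_space set set \<Rightarrow> bool" where
  "radially_sublinear \<U> \<longleftrightarrow> (\<exists>a. \<forall>\<epsilon>>0. \<exists>M. \<forall>m\<ge>M. \<forall>U\<in>\<U>.
      infdist a U \<le> m \<longrightarrow> bounded U \<and> diameter U \<le> \<epsilon> * m)"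

definition R_multiplicity_le :: "real \<Rightarrow> 'b::metric_space set set \<Rightarrow> nat \<Rightarrow> bool" where
  "R_multiplicity_le R \<U> k \<longleftrightarrow> (\<forall>x. finite {U\<in>\<U>. U \<inter> cball x R \<noteq> {}} \<and>
      card {U\<in>\<U>. U \<inter> cball x R \<noteq> {}} \<le> k)"

definition covering_dim_le :: "'a topology \<Rightarrow> int \<Rightarrow> bool" where
  "covering_dim_le X n \<longleftrightarrow> (\<forall>\<U>. finite \<U> \<and> (\<forall>U\<in>\<U>. openin X U) \<and> \<Union>\<U> = topspace X \<longrightarrow>
      (\<exists>\<V>. finite \<V> \<and> (\<forall>V\<in>\<V>. openin X V) \<and> \<Union>\<V> = topspace X \<and>
         (\<forall>V\<in>\<V>. \<exists>U\<in>\<U>. V \<subseteq> U) \<and>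
         (\<forall>x\<in>topspace X. int (card {V\<in>\<V>. x \<in> V}) \<le> n + 1)))"

definition dim_top :: "'a topology \<Rightarrow> ereal" where
  "dim_top X = Inf {ereal (of_int n) | n. covering_dim_le X n}"

end

(*
  Pull the radially sublinear covers of N' back to N along the quasi-isometry, at the scale
  that keeps the multiplicity of unit balls at most k.  Since N admits dilations it has a
  contracting similarity, which fixes a point z because N is proper and hence complete.
  Pushing the pulled-back cover forward by a high iterate of the contraction gives covers of
  N of multiplicity at most k at a positive scale whose members near z are as small as we
  like: sublinear growth beats the rescaling.  Such covers allow one to shrink any finite open
  cover of N so that on a given ball around z every point lies in the closures of at most k
  members.  Iterating over larger and larger balls and intersecting the closures yields a
  closed cover of order k inside the given one, which is then swollen to an open refinement
  of order k.
*)

theory Submission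
  imports Defs
begin

section \<open>Pulling covers back along a quasi-isometry\<close>

lemma bounded_diameter_le:
  fixes S :: "'a::metric_space set"
  assumes "\<And>x y. x \<in> S \<Longrightarrow> y \<in> S \<Longrightarrow> dist x y \<le> d" and "0 \<le> d"
  shows "bounded S \<and> diameter S \<le> d"
proof (cases "S = {}")
  case False
  then obtain x where "x \<in> S" by blast
  then have "bounded S" unfolding bounded_def using assms(1) by blast
  moreover have "diameter S \<le> d"
    unfolding diameter_def using False assms(1) by (auto intro!: cSUP_least)
  ultimately show ?thesis ..
qed (use assms(2) in simp)

lemma diameter_image_similarity_le:
  fixes h :: "'a::metric_space \<Rightarrow> 'b::metric_space"
  assumes "\<And>x y. dist (h x) (h y) = r * dist x y" and "0 \<le> r" and "bounded V"
  shows "bounded (h ` V) \<and> diameter (h ` V) \<le> r * diameter V"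
  using assms by (intro bounded_diameter_le)
    (auto intro!: mult_left_mono mult_nonneg_nonneg diameter_bounded_bound diameter_ge_0)

lemma bounded_diameter_vimage_le:
  fixes f :: "'a::metric_space \<Rightarrow> 'b::metric_space"
  assumes lower: "\<And>x y. dist x y / L - C \<le> dist (f x) (f y)" and "0 < L" "0 \<le> C" and "bounded U"
  shows "bounded (f -` U) \<and> diameter (f -` U) \<le> L * (diameter U + C)"
proof (rule bounded_diameter_le)
  fix x y assume "x \<in> f -` U" "y \<in> f -` U"
  then have "dist (f x) (f y) \<le> diameter U" using diameter_bounded_bound[OF \<open>bounded U\<close>] by simp
  have "dist x y \<le> L * (dist (f x) (f y) + C)" using lower[of x y] \<open>0 < L\<close> by (simp add: field_simps)
  also have "\<dots> \<le> L * (diameter U + C)" using \<open>dist (f x) (f y) \<le> diameter U\<close> \<open>0 < L\<close> by simp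
  finally show "dist x y \<le> L * (diameter U + C)" .
qed (use assms(2-4) in \<open>simp add: diameter_ge_0\<close>)

lemma infdist_le_coarse_lipschitz_image:
  fixes f :: "'a::metric_space \<Rightarrow> 'b::metric_space"
  assumes upper: "\<And>x y. dist (f x) (f y) \<le> L * dist x y + C" and "0 \<le> L"
    and "V \<noteq> {}" and "f ` V \<subseteq> U"
  shows "infdist b U \<le> dist b (f a) + L * (infdist a V + 1) + C"
proof -
  have "(INF p\<in>V. dist a p) < infdist a V + 1" using \<open>V \<noteq> {}\<close> by (simp add: infdist_notempty)
  then obtain p where "p \<in> V" "dist a p < infdist a V + 1"
    using \<open>V \<noteq> {}\<close> by (auto simp: cINF_less_iff)
  have "infdist b U \<le> dist b (f a) + dist (f a) (f p)"
    using infdist_le[of "f p" U b] \<open>p \<in> V\<close> \<open>f ` V \<subseteq> U\<close> dist_triangle[of b "f p" "f a"] by auto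
  also have "\<dots> \<le> dist b (f a) + L * (infdist a V + 1) + C"
    using upper[of a p] mult_left_mono[OF less_imp_le[OF \<open>dist a p < infdist a V + 1\<close>] \<open>0 \<le> L\<close>]
    by linarith
  finally show ?thesis .
qed

lemma R_multiplicity_le_vimage:
  fixes f :: "'a::metric_space \<Rightarrow> 'b::metric_space"
  assumes lip: "\<And>x y. dist (f x) (f y) \<le> L * dist x y + C" and "0 \<le> L"
    and mult: "R_multiplicity_le (L * s + C) \<U> k"
  shows "R_multiplicity_le s ((\<lambda>U. f -` U) ` \<U>) k"
  unfolding R_multiplicity_le_def
proof
  fix x
  let ?S = "{V \<in> (\<lambda>U. f -` U) ` \<U>. V \<inter> cball x s \<noteq> {}}"
  let ?T = "{U\<in>\<U>. U \<inter> cball (f x) (L * s + C) \<noteq> {}}"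
  have T: "finite ?T" "card ?T \<le> k" using mult unfolding R_multiplicity_le_def by auto
  have "?S \<subseteq> (\<lambda>U. f -` U) ` ?T"
  proof
    fix V assume "V \<in> ?S"
    then obtain U where U: "U \<in> \<U>" "V = f -` U" "V \<inter> cball x s \<noteq> {}" by blast
    then obtain y where "f y \<in> U" "dist x y \<le> s" by auto
    moreover have "dist (f x) (f y) \<le> L * s + C"
      using lip[of x y] mult_left_mono[OF \<open>dist x y \<le> s\<close> \<open>0 \<le> L\<close>] by linarith
    ultimately have "U \<in> ?T" using U(1) by auto
    then show "V \<in> (\<lambda>U. f -` U) ` ?T" using U(2) by (rule rev_image_eqI)
  qed
  then have "finite ?S" "card ?S \<le> card ?T"
    using T(1) by (simp_all add: finite_surj surj_card_le)
  then show "finite ?S \<and> card ?S \<le> k" using T(2) by simp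
qed

lemma radially_sublinear_vimage:
  fixes f :: "'a::metric_space \<Rightarrow> 'b::metric_space"
  assumes lower: "\<And>x y. dist x y / L - C \<le> dist (f x) (f y)"
    and upper: "\<And>x y. dist (f x) (f y) \<le> L * dist x y + C"
    and L: "1 \<le> L" and C: "0 \<le> C" and "radially_sublinear \<U>"
  shows "radially_sublinear ((\<lambda>U. f -` U) ` \<U>)"
proof -
  obtain b where b: "\<forall>\<epsilon>>0. \<exists>M. \<forall>m\<ge>M. \<forall>U\<in>\<U>. infdist b U \<le> m \<longrightarrow> bounded U \<and> diameter U \<le> \<epsilon> * m"
    using \<open>radially_sublinear \<U>\<close> unfolding radially_sublinear_def by blast
  fix a :: 'a
  have "\<exists>M. \<forall>m\<ge>M. \<forall>V\<in>(\<lambda>U. f -` U) ` \<U>. infdist a V \<le> m \<longrightarrow> bounded V \<and> diameter V \<le> \<epsilon> * m"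
    if "\<epsilon> > 0" for \<epsilon>
  proof -
    have "\<epsilon> / (4 * L\<^sup>2) > 0" using \<open>\<epsilon> > 0\<close> L by simp
    then obtain M\<^sub>U where M\<^sub>U: "\<And>m U. m \<ge> M\<^sub>U \<Longrightarrow> U \<in> \<U> \<Longrightarrow> infdist b U \<le> m \<Longrightarrow>
        bounded U \<and> diameter U \<le> \<epsilon> / (4 * L\<^sup>2) * m"
      using b by blast
    define M where "M = max (max (dist b (f a) + L + C) (M\<^sub>U / (2 * L))) (max (2 * L * C / \<epsilon>) 0)"
    show ?thesis
    proof (intro exI[of _ M] allI impI ballI)
      fix m V assume "M \<le> m" "V \<in> (\<lambda>U. f -` U) ` \<U>" and aV: "infdist a V \<le> m"
      then obtain U where U: "U \<in> \<U>" "V = f -` U" by blast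
      have m: "0 \<le> m" "dist b (f a) + L + C \<le> m" "M\<^sub>U \<le> 2 * L * m" "L * C \<le> \<epsilon> * m / 2"
        using \<open>M \<le> m\<close> L \<open>\<epsilon> > 0\<close> by (auto simp: M_def field_simps)
      show "bounded V \<and> diameter V \<le> \<epsilon> * m"
      proof (cases "V = {}")
        case False
        have "infdist b U \<le> dist b (f a) + L * (infdist a V + 1) + C"
          using infdist_le_coarse_lipschitz_image[OF upper _ False] L U(2) by auto
        also have "\<dots> \<le> dist b (f a) + L * (m + 1) + C"
          using aV L by (simp add: mult_left_mono)
        also have "\<dots> \<le> 2 * L * m"
          using m(1,2) mult_left_mono[OF L m(1)] by (simp add: algebra_simps)
        finally have "bounded U" and "diameter U \<le> \<epsilon> / (4 * L\<^sup>2) * (2 * L * m)"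
          using M\<^sub>U[OF m(3) U(1)] by auto
        then have "L * (diameter U + C) \<le> \<epsilon> * m"
          using L m(4) by (simp add: power2_eq_square field_simps)
        then show ?thesis
          using bounded_diameter_vimage_le[OF lower _ C \<open>bounded U\<close>] L U(2) by auto
      qed (use m(1) \<open>\<epsilon> > 0\<close> in simp)
    qed
  qed
  then show ?thesis unfolding radially_sublinear_def by blast
qed

lemma quasi_isometric_pullback_sublinear_cover:
  assumes "quasi_isometric TYPE('a::metric_space) TYPE('b::metric_space)"
    and "\<forall>R>0. \<exists>\<U>::'b set set. \<Union>\<U> = UNIV \<and> radially_sublinear \<U> \<and> R_multiplicity_le R \<U> k"
  shows "\<exists>\<V>::'a set set. \<Union>\<V> = UNIV \<and> radially_sublinear \<V> \<and> R_multiplicity_le 1 \<V> k"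
proof -
  from assms(1)[unfolded quasi_isometric_def]
  obtain f :: "'a \<Rightarrow> 'b" and L C where "1 \<le> L" "0 \<le> C"
    and qi: "\<forall>x y. dist x y / L - C \<le> dist (f x) (f y) \<and> dist (f x) (f y) \<le> L * dist x y + C"
    by (elim exE conjE)
  have lower: "\<And>x y. dist x y / L - C \<le> dist (f x) (f y)"
    and upper: "\<And>x y. dist (f x) (f y) \<le> L * dist x y + C"
    using qi by simp_all
  have "0 < L * 1 + C" using \<open>1 \<le> L\<close> \<open>0 \<le> C\<close> by simp
  from assms(2)[rule_format, OF this]
  obtain \<U> :: "'b set set" where "\<Union>\<U> = UNIV" "radially_sublinear \<U>" "R_multiplicity_le (L * 1 + C) \<U> k"
    by (elim exE conjE)
  show ?thesis
  proof (intro exI[of _ "(\<lambda>U. f -` U) ` \<U>"] conjI)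
    show "\<Union>((\<lambda>U. f -` U) ` \<U>) = UNIV" using \<open>\<Union>\<U> = UNIV\<close> vimage_Union[of f \<U>] by simp
    show "radially_sublinear ((\<lambda>U. f -` U) ` \<U>)"
      using radially_sublinear_vimage[OF lower upper \<open>1 \<le> L\<close> \<open>0 \<le> C\<close> \<open>radially_sublinear \<U>\<close>] .
    show "R_multiplicity_le 1 ((\<lambda>U. f -` U) ` \<U>) k"
      using R_multiplicity_le_vimage[OF upper _ \<open>R_multiplicity_le (L * 1 + C) \<U> k\<close>] \<open>1 \<le> L\<close> by simp
  qed
qed

section \<open>Small covers from a contracting similarity\<close>

lemma dist_funpow_similarity:
  fixes \<phi> :: "'a::metric_space \<Rightarrow> 'a"
  assumes "\<And>x y. dist (\<phi> x) (\<phi> y) = c * dist x y"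
  shows "dist ((\<phi> ^^ n) x) ((\<phi> ^^ n) y) = c ^ n * dist x y"
  by (induction n) (auto simp: assms)

lemma proper_imp_complete:
  assumes "\<And>x::'a::metric_space. \<And>r. compact (cball x r)"
  shows "complete (UNIV :: 'a set)"
proof (rule completeI)
  fix \<sigma> :: "nat \<Rightarrow> 'a" assume "Cauchy \<sigma>"
  then obtain x r where "range \<sigma> \<subseteq> cball x r"
    using cauchy_imp_bounded bounded_subset_cball by metis
  then show "\<exists>l\<in>UNIV. \<sigma> \<longlonglongrightarrow> l"
    using compact_imp_complete[OF assms] \<open>Cauchy \<sigma>\<close> by (metis UNIV_I completeE range_subsetD)
qed

lemma contracting_similarity_if_admits_dilations:
  assumes "admits_dilations TYPE('a)"
  obtains \<phi> :: "'a::metric_space \<Rightarrow> 'a" and c :: real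
  where "bij \<phi>" "0 < c" "c < 1" "\<And>x y. dist (\<phi> x) (\<phi> y) = c * dist x y"
proof (cases "\<forall>x y::'a. x = y")
  case True
  then show ?thesis by (intro that[of id "1/2"]) auto
next
  case False
  then obtain x y :: 'a where "x \<noteq> y" by blast
  obtain \<mu> and \<psi> :: "'a \<Rightarrow> 'a" where "\<mu> \<noteq> 1" "bij \<psi>" and \<psi>: "\<And>x x'. dist (\<psi> x) (\<psi> x') = \<mu> * dist x x'"
    using assms unfolding admits_dilations_def by blast
  have "\<psi> x \<noteq> \<psi> y" using \<open>x \<noteq> y\<close> bij_is_inj[OF \<open>bij \<psi>\<close>] by (simp add: inj_eq)
  then have "0 < \<mu> * dist x y" using \<psi>[of x y] zero_less_dist_iff by metis
  then have "0 < \<mu>" by (simp add: zero_less_mult_iff)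
  show ?thesis
  proof (cases "\<mu> < 1")
    case True
    then show ?thesis using that \<open>bij \<psi>\<close> \<psi> \<open>0 < \<mu>\<close> by blast
  next
    case False
    have "dist (inv \<psi> x) (inv \<psi> x') = 1/\<mu> * dist x x'" for x x'
      using \<psi>[of "inv \<psi> x" "inv \<psi> x'"] \<open>0 < \<mu>\<close>
      by (simp add: surj_f_inv_f[OF bij_is_surj[OF \<open>bij \<psi>\<close>]] field_simps)
    then show ?thesis
      using that[of "inv \<psi>" "1/\<mu>"] False \<open>\<mu> \<noteq> 1\<close> \<open>0 < \<mu>\<close> \<open>bij \<psi>\<close> by (simp add: bij_imp_bij_inv)
  qed
qed

lemma R_multiplicity_le_image_similarity:
  fixes h :: "'a::metric_space \<Rightarrow> 'b::metric_space"
  assumes "surj h" and sim: "\<And>x y. dist (h x) (h y) = r * dist x y" and "0 < r"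
    and mult: "R_multiplicity_le s \<V> k"
  shows "R_multiplicity_le (r * s) ((\<lambda>V. h ` V) ` \<V>) k"
  unfolding R_multiplicity_le_def
proof
  fix x
  obtain y where x: "x = h y" using \<open>surj h\<close> by (metis surjD)
  let ?S = "{W \<in> (\<lambda>V. h ` V) ` \<V>. W \<inter> cball x (r * s) \<noteq> {}}"
  let ?T = "{V\<in>\<V>. V \<inter> cball y s \<noteq> {}}"
  have T: "finite ?T" "card ?T \<le> k" using mult unfolding R_multiplicity_le_def by auto
  have "?S \<subseteq> (\<lambda>V. h ` V) ` ?T"
  proof
    fix W assume "W \<in> ?S"
    then obtain V where V: "V \<in> \<V>" "W = h ` V" "W \<inter> cball x (r * s) \<noteq> {}" by blast
    then obtain z where "z \<in> V" "dist x (h z) \<le> r * s" by auto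
    moreover have "dist y z \<le> s" using calculation x sim \<open>0 < r\<close> by simp
    ultimately have "V \<in> ?T" using V(1) by auto
    then show "W \<in> (\<lambda>V. h ` V) ` ?T" using V(2) by (rule rev_image_eqI)
  qed
  then have "finite ?S" "card ?S \<le> card ?T"
    using T(1) by (simp_all add: finite_surj surj_card_le)
  then show "finite ?S \<and> card ?S \<le> k" using T(2) by simp
qed

definition small_covers_near :: "'a::metric_space \<Rightarrow> nat \<Rightarrow> bool" where
  "small_covers_near a k \<longleftrightarrow> (\<forall>\<rho> e. e > 0 \<longrightarrow> (\<exists>r>0. \<exists>\<V>::'a set set. \<Union>\<V> = UNIV \<and>
      R_multiplicity_le r \<V> k \<and> (\<forall>V\<in>\<V>. V \<inter> cball a \<rho> \<noteq> {} \<longrightarrow> bounded V \<and> diameter V \<le> e)))"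

lemma radially_sublinear_near_ball:
  fixes \<V> :: "'a::metric_space set set"
  assumes "radially_sublinear \<V>" and "0 < \<epsilon>"
  shows "\<exists>M. \<forall>R\<ge>M. \<forall>V\<in>\<V>. V \<inter> cball z R \<noteq> {} \<longrightarrow> bounded V \<and> diameter V \<le> \<epsilon> * R"
proof -
  obtain a :: 'a where a: "\<forall>\<epsilon>>0. \<exists>M. \<forall>m\<ge>M. \<forall>V\<in>\<V>. infdist a V \<le> m \<longrightarrow> bounded V \<and> diameter V \<le> \<epsilon> * m"
    using \<open>radially_sublinear \<V>\<close> unfolding radially_sublinear_def by blast
  obtain M where M: "\<And>m V. m \<ge> M \<Longrightarrow> V \<in> \<V> \<Longrightarrow> infdist a V \<le> m \<Longrightarrow>
      bounded V \<and> diameter V \<le> \<epsilon> / 2 * m"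
    using a half_gt_zero[OF \<open>0 < \<epsilon>\<close>] by blast
  show ?thesis
  proof (intro exI[of _ "max M (dist a z)"] allI impI ballI)
    fix R V assume R: "max M (dist a z) \<le> R" and "V \<in> \<V>" "V \<inter> cball z R \<noteq> {}"
    then obtain p where "p \<in> V" "dist z p \<le> R" by auto
    then have "infdist a V \<le> dist a z + R"
      using infdist_le[OF \<open>p \<in> V\<close>, of a] dist_triangle[of a p z] by linarith
    moreover have "dist a z \<le> R" "M \<le> R" using R by auto
    moreover from this have "M \<le> dist a z + R" using zero_le_dist[of a z] by linarith
    ultimately have V: "bounded V" "diameter V \<le> \<epsilon> / 2 * (dist a z + R)" using M \<open>V \<in> \<V>\<close> by blast+
    have "\<epsilon> / 2 * (dist a z + R) \<le> \<epsilon> * R"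
      using \<open>dist a z \<le> R\<close> \<open>0 < \<epsilon>\<close> by (simp add: field_simps)
    then show "bounded V \<and> diameter V \<le> \<epsilon> * R" using V by linarith
  qed
qed

lemma similar_image_small_near_fixed_point:
  fixes h :: "'a::metric_space \<Rightarrow> 'a"
  assumes sim: "\<And>x y. dist (h x) (h y) = r * dist x y" and "0 < r" and "h z = z"
    and small: "\<forall>V\<in>\<V>. V \<inter> cball z (\<rho> / r) \<noteq> {} \<longrightarrow> bounded V \<and> diameter V \<le> \<delta> / r"
  shows "\<forall>W\<in>(\<lambda>V. h ` V) ` \<V>. W \<inter> cball z \<rho> \<noteq> {} \<longrightarrow> bounded W \<and> diameter W \<le> \<delta>"
proof (intro ballI impI)
  fix W assume "W \<in> (\<lambda>V. h ` V) ` \<V>" "W \<inter> cball z \<rho> \<noteq> {}"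
  then obtain V where "V \<in> \<V>" "W = h ` V" by blast
  then obtain p where "p \<in> V" "dist z (h p) \<le> \<rho>" using \<open>W \<inter> cball z \<rho> \<noteq> {}\<close> by auto
  then have "r * dist z p \<le> \<rho>" using sim[of z p] \<open>h z = z\<close> by simp
  then have "p \<in> V \<inter> cball z (\<rho> / r)" using \<open>p \<in> V\<close> \<open>0 < r\<close> by (simp add: field_simps)
  then have V: "bounded V" "diameter V \<le> \<delta> / r" using small \<open>V \<in> \<V>\<close> by blast+
  then have "bounded W" "diameter W \<le> r * diameter V"
    using diameter_image_similarity_le[OF sim _ \<open>bounded V\<close>] \<open>W = h ` V\<close> \<open>0 < r\<close> by auto
  moreover have "r * diameter V \<le> \<delta>" using V(2) \<open>0 < r\<close> by (simp add: field_simps)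
  ultimately show "bounded W \<and> diameter W \<le> \<delta>" by linarith
qed

lemma small_covers_near_fixed_point:
  fixes \<phi> :: "'a::metric_space \<Rightarrow> 'a" and \<V> :: "'a set set"
  assumes "bij \<phi>" and c: "0 < c" "c < 1" and sim: "\<And>x y. dist (\<phi> x) (\<phi> y) = c * dist x y"
    and "\<phi> z = z"
    and cover: "\<Union>\<V> = UNIV" and "radially_sublinear \<V>" and mult: "R_multiplicity_le 1 \<V> k"
  shows "small_covers_near z k"
  unfolding small_covers_near_def
proof (intro allI impI)
  fix \<rho> e :: real assume "0 < e"
  define \<rho>' where "\<rho>' = \<bar>\<rho>\<bar> + 1"
  have "0 < \<rho>'" "cball z \<rho> \<subseteq> cball z \<rho>'" by (auto simp: \<rho>'_def add_nonneg_pos)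
  then have "0 < e / \<rho>'" using \<open>0 < e\<close> by simp
  from radially_sublinear_near_ball[OF \<open>radially_sublinear \<V>\<close> this, of z]
  obtain M where M: "\<forall>R\<ge>M. \<forall>V\<in>\<V>. V \<inter> cball z R \<noteq> {} \<longrightarrow> bounded V \<and> diameter V \<le> e / \<rho>' * R"
    by blast
  define M' where "M' = max M 0"
  have "0 < \<rho>' / (M' + 1)" using \<open>0 < \<rho>'\<close> by (simp add: M'_def add_nonneg_pos)
  then obtain n where "c ^ n < \<rho>' / (M' + 1)" using real_arch_pow_inv c(2) by blast
  then have "c ^ n * (M' + 1) < \<rho>'" by (simp add: M'_def pos_less_divide_eq add_nonneg_pos)
  then have "c ^ n * M' \<le> \<rho>'" using zero_less_power[OF c(1), of n] by (simp add: distrib_left)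
  then have "M' \<le> \<rho>' / c ^ n" using c by (simp add: pos_le_divide_eq mult.commute)
  then have "M \<le> \<rho>' / c ^ n" using max.cobounded1[of M 0] unfolding M'_def by linarith
  define h where "h = \<phi> ^^ n"
  have h_sim: "\<And>x y. dist (h x) (h y) = c ^ n * dist x y"
    unfolding h_def by (rule dist_funpow_similarity[OF sim])
  have "surj h" unfolding h_def using \<open>bij \<phi>\<close> by (simp add: bij_betw_funpow bij_is_surj)
  have "h z = z" unfolding h_def using \<open>\<phi> z = z\<close> by (induction n) auto
  have "\<forall>V\<in>\<V>. V \<inter> cball z (\<rho>' / c ^ n) \<noteq> {} \<longrightarrow> bounded V \<and> diameter V \<le> e / c ^ n"
  proof (intro ballI impI)
    fix V assume "V \<in> \<V>" "V \<inter> cball z (\<rho>' / c ^ n) \<noteq> {}"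
    then have "bounded V \<and> diameter V \<le> e / \<rho>' * (\<rho>' / c ^ n)" using M \<open>M \<le> \<rho>' / c ^ n\<close> by blast
    then show "bounded V \<and> diameter V \<le> e / c ^ n" using \<open>0 < \<rho>'\<close> by simp
  qed
  from similar_image_small_near_fixed_point[OF h_sim _ \<open>h z = z\<close> this] c
  have small: "\<forall>W\<in>(\<lambda>V. h ` V) ` \<V>. W \<inter> cball z \<rho>' \<noteq> {} \<longrightarrow> bounded W \<and> diameter W \<le> e"
    by simp
  show "\<exists>r>0. \<exists>\<W>::'a set set. \<Union>\<W> = UNIV \<and> R_multiplicity_le r \<W> k \<and>
      (\<forall>W\<in>\<W>. W \<inter> cball z \<rho> \<noteq> {} \<longrightarrow> bounded W \<and> diameter W \<le> e)"
  proof (intro exI conjI)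
    show "0 < c ^ n" using c by simp
    show "\<Union>((\<lambda>V. h ` V) ` \<V>) = UNIV"
      using cover \<open>surj h\<close> image_Union[of h \<V>] by simp
    show "R_multiplicity_le (c ^ n) ((\<lambda>V. h ` V) ` \<V>) k"
      using R_multiplicity_le_image_similarity[OF \<open>surj h\<close> h_sim _ mult] c by simp
    show "\<forall>W\<in>(\<lambda>V. h ` V) ` \<V>. W \<inter> cball z \<rho> \<noteq> {} \<longrightarrow> bounded W \<and> diameter W \<le> e"
      using small \<open>cball z \<rho> \<subseteq> cball z \<rho>'\<close> by blast
  qed
qed

section \<open>Covering dimension from small covers\<close>

lemma continuous_positive_minorant:
  fixes g :: "'s \<Rightarrow> 'a::topological_space \<Rightarrow> real"
  assumes "finite \<S>" and cont: "\<And>S. S \<in> \<S> \<Longrightarrow> continuous_on UNIV (g S)"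
    and pos: "\<And>S x. S \<in> \<S> \<Longrightarrow> 0 < g S x"
  shows "\<exists>\<eta>. continuous_on UNIV \<eta> \<and> (\<forall>x. 0 < \<eta> x) \<and> (\<forall>S\<in>\<S>. \<forall>x. \<eta> x \<le> g S x)"
proof (intro exI conjI allI ballI)
  define h where "h x = 1 + (\<Sum>S\<in>\<S>. 1 / g S x)" for x
  have h_ge_1: "1 \<le> h x" for x
    using pos unfolding h_def by (auto intro!: sum_nonneg simp: less_imp_le)
  have h_ge: "1 / g S x \<le> h x - 1" if "S \<in> \<S>" for S x
    using that pos \<open>finite \<S>\<close> unfolding h_def by (auto intro!: member_le_sum simp: less_imp_le)
  have "h x \<noteq> 0" for x using h_ge_1[of x] by auto
  have "continuous_on UNIV h"
    unfolding h_def using cont pos by (intro continuous_intros) (auto simp: less_imp_neq[symmetric])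
  then show "continuous_on UNIV (\<lambda>x. 1 / h x)"
    using \<open>\<And>x. h x \<noteq> 0\<close> by (intro continuous_intros) auto
  show "0 < 1 / h x" for x using h_ge_1[of x] by simp
  show "1 / h x \<le> g S x" if "S \<in> \<S>" for S x
    using h_ge[OF that, of x] pos[OF that, of x] h_ge_1[of x] by (simp add: field_simps)
qed

lemma sum_pos_if_few_zeros:
  fixes d :: "'i \<Rightarrow> real"
  assumes "finite I" and "\<And>i. 0 \<le> d i" and "card {i\<in>I. d i = 0} \<le> k"
    and "S \<subseteq> I" and "card S = Suc k"
  shows "0 < (\<Sum>i\<in>S. d i)"
proof -
  have "\<not> S \<subseteq> {i\<in>I. d i = 0}"
    using assms(3,5) card_mono[of "{i\<in>I. d i = 0}" S] \<open>finite I\<close> by auto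
  then obtain i where "i \<in> S" "d i \<noteq> 0" using \<open>S \<subseteq> I\<close> by auto
  then show ?thesis
    using assms(2) finite_subset[OF \<open>S \<subseteq> I\<close> \<open>finite I\<close>]
    by (intro sum_pos2[of S i]) (auto simp: less_le)
qed

lemma open_cover_of_order_le_from_zero_sets:
  fixes U :: "'i \<Rightarrow> 'a::topological_space set" and d :: "'i \<Rightarrow> 'a \<Rightarrow> real"
  assumes "finite I" and U: "\<And>i. i \<in> I \<Longrightarrow> open (U i)"
    and d_cont: "\<And>i. continuous_on UNIV (d i)" and d_nonneg: "\<And>i x. 0 \<le> d i x"
    and cover: "\<And>x. \<exists>i\<in>I. x \<in> U i \<and> d i x = 0" and order: "\<And>x. card {i\<in>I. d i x = 0} \<le> k"
  shows "\<exists>G. (\<forall>i\<in>I. open (G i) \<and> G i \<subseteq> U i) \<and> (\<Union>i\<in>I. G i) = UNIV \<and>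
    (\<forall>x. card {i\<in>I. x \<in> G i} \<le> k)"
proof -
  define \<S> where "\<S> = {S. S \<subseteq> I \<and> card S = Suc k}"
  have fin: "finite \<S>" using \<open>finite I\<close> by (simp add: \<S>_def)
  have cont: "continuous_on UNIV (\<lambda>x. \<Sum>i\<in>S. d i x)" for S
    using d_cont by (intro continuous_intros)
  have pos: "0 < (\<Sum>i\<in>S. d i x)" if "S \<in> \<S>" for S x
    using sum_pos_if_few_zeros[OF \<open>finite I\<close> d_nonneg order] that by (simp add: \<S>_def)
  obtain \<eta> where "continuous_on UNIV \<eta>" and \<eta>_pos: "\<And>x. 0 < \<eta> x"
    and \<eta>_le: "\<And>S x. S \<in> \<S> \<Longrightarrow> \<eta> x \<le> (\<Sum>i\<in>S. d i x)"
    using continuous_positive_minorant[of \<S> "\<lambda>S x. \<Sum>i\<in>S. d i x", OF fin cont pos] by blast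
  define G where "G i = U i \<inter> {x. real (Suc k) * d i x < \<eta> x}" for i
  show ?thesis
  proof (intro exI[of _ G] conjI ballI allI)
    show "open (G i)" if "i \<in> I" for i
      unfolding G_def using U[OF that] d_cont \<open>continuous_on UNIV \<eta>\<close>
      by (intro open_Int open_Collect_less) (auto intro: continuous_intros)
    show "G i \<subseteq> U i" if "i \<in> I" for i by (auto simp: G_def)
    have "x \<in> (\<Union>i\<in>I. G i)" for x
    proof -
      obtain i where "i \<in> I" "x \<in> U i" "d i x = 0" using cover by blast
      then show ?thesis using \<eta>_pos[of x] by (auto simp: G_def)
    qed
    then show "(\<Union>i\<in>I. G i) = UNIV" by blast
    show "card {i\<in>I. x \<in> G i} \<le> k" for x
    proof (rule ccontr)
      assume "\<not> ?thesis"
      then obtain S where S: "S \<subseteq> {i\<in>I. x \<in> G i}" "card S = Suc k"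
        by (meson not_less_eq_eq obtain_subset_with_card_n)
      then have "S \<in> \<S>" "finite S" using \<open>finite I\<close> by (auto simp: \<S>_def intro: finite_subset)
      have "real (Suc k) * (\<Sum>i\<in>S. d i x) = (\<Sum>i\<in>S. real (Suc k) * d i x)"
        by (simp add: sum_distrib_left)
      also have "\<dots> < (\<Sum>i\<in>S. \<eta> x)"
        using S \<open>finite S\<close> by (intro sum_strict_mono) (auto simp: G_def)
      also have "\<dots> = real (Suc k) * \<eta> x" using S(2) by simp
      finally show False using \<eta>_le[OF \<open>S \<in> \<S>\<close>, of x] by simp
    qed
  qed
qed

lemma closed_cover_swelling:
  fixes U E :: "'i \<Rightarrow> 'a::metric_space set"
  assumes "finite I" and U: "\<And>i. i \<in> I \<Longrightarrow> open (U i)" and E: "\<And>i. closed (E i)"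
    and cover: "(\<Union>i\<in>I. U i \<inter> E i) = UNIV" and order: "\<And>x. card {i\<in>I. x \<in> E i} \<le> k"
  shows "\<exists>G. (\<forall>i\<in>I. open (G i) \<and> G i \<subseteq> U i) \<and> (\<Union>i\<in>I. G i) = UNIV \<and>
    (\<forall>x. card {i\<in>I. x \<in> G i} \<le> k)"
proof (rule open_cover_of_order_le_from_zero_sets[OF \<open>finite I\<close> U])
  define d where "d i x = (if E i = {} then 1 else infdist x (E i))" for i x
  have d_zero: "d i x = 0 \<longleftrightarrow> x \<in> E i" for i x
    using in_closed_iff_infdist_zero[OF E] by (simp add: d_def)
  show "continuous_on UNIV (d i)" for i
    by (cases "E i = {}") (auto simp: d_def intro!: continuous_intros)
  show "0 \<le> d i x" for i x by (simp add: d_def infdist_nonneg)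
  show "\<exists>i\<in>I. x \<in> U i \<and> d i x = 0" for x
  proof -
    have "x \<in> (\<Union>i\<in>I. U i \<inter> E i)" using cover by simp
    then show ?thesis using d_zero by blast
  qed
  show "card {i\<in>I. d i x = 0} \<le> k" for x using order[of x] by (simp add: d_zero)
qed

lemma closure_UN_balls_meets_cball:
  fixes \<A> :: "'a::metric_space set set"
  assumes "x \<in> closure (\<Union>V\<in>\<A>. \<Union>v\<in>V. ball v s)" and "s < r"
  shows "\<exists>V\<in>\<A>. V \<inter> cball x r \<noteq> {}"
proof -
  obtain y where "y \<in> (\<Union>V\<in>\<A>. \<Union>v\<in>V. ball v s)" "dist y x < r - s"
    using assms unfolding closure_approachable by (meson diff_gt_0_iff_gt)
  then obtain V v where "V \<in> \<A>" "v \<in> V" "dist v y < s" by auto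
  then have "dist x v \<le> r" using \<open>dist y x < r - s\<close> dist_triangle[of x v y] by (simp add: dist_commute)
  then have "v \<in> V \<inter> cball x r" using \<open>v \<in> V\<close> by simp
  then show ?thesis using \<open>V \<in> \<A>\<close> by blast
qed

lemma shrink_open_cover_near:
  fixes W :: "'i \<Rightarrow> 'a::metric_space set"
  assumes W: "\<And>i. i \<in> I \<Longrightarrow> open (W i)" "(\<Union>i\<in>I. W i) = UNIV"
    and \<V>: "\<Union>\<V> = UNIV" "R_multiplicity_le r \<V> k" and s: "0 < s" "s < r"
    and fine: "\<And>V. V \<in> \<V> \<Longrightarrow> V \<inter> cball a (\<rho> + 1) \<noteq> {} \<Longrightarrow> \<exists>i\<in>I. (\<Union>v\<in>V. ball v s) \<subseteq> W i"
  shows "\<exists>W'. (\<forall>i\<in>I. open (W' i) \<and> W' i \<subseteq> W i) \<and> (\<Union>i\<in>I. W' i) = UNIV \<and>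
    (\<forall>x\<in>cball a \<rho>. card {i\<in>I. x \<in> closure (W' i)} \<le> k)"
proof -
  let ?K = "cball a (\<rho> + 1)"
  define N where "N V = (\<Union>v\<in>V. ball v s)" for V :: "'a set"
  define ch where "ch V = (SOME i. i \<in> I \<and> N V \<subseteq> W i)" for V
  have ch: "ch V \<in> I \<and> N V \<subseteq> W (ch V)" if "V \<in> \<V>" "V \<inter> ?K \<noteq> {}" for V
  proof -
    have "\<exists>i. i \<in> I \<and> N V \<subseteq> W i" using fine[OF that] by (simp only: N_def Bex_def)
    from someI_ex[OF this] show ?thesis unfolding ch_def .
  qed
  \<comment> \<open>Thicken each member meeting \<open>?K\<close> and hand it to one \<open>W i\<close> containing the thickening;
    a point of \<open>cball a \<rho>\<close> in the closure of \<open>W' i\<close> is then \<open>r\<close>-close to a member assigned to \<open>i\<close>.\<close>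
  define W' where "W' i = (\<Union>V\<in>{V\<in>\<V>. V \<inter> ?K \<noteq> {} \<and> ch V = i}. N V) \<union> (W i - ?K)" for i
  show ?thesis
  proof (intro exI[of _ W'] conjI ballI)
    fix i assume "i \<in> I"
    show "open (W' i)" unfolding W'_def N_def
      by (intro open_Un open_UN open_Diff ballI open_ball closed_cball W(1)[OF \<open>i \<in> I\<close>])
    have "N V \<subseteq> W i" if "V \<in> \<V>" "V \<inter> ?K \<noteq> {}" "ch V = i" for V
      using ch[OF that(1,2)] that(3) by blast
    then show "W' i \<subseteq> W i" unfolding W'_def by blast
  next
    have "x \<in> (\<Union>i\<in>I. W' i)" for x
    proof (cases "x \<in> ?K")
      case True
      have "x \<in> \<Union>\<V>" using \<V>(1) by simp
      then obtain V where V: "V \<in> \<V>" "x \<in> V" by blast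
      have VK: "V \<inter> ?K \<noteq> {}" using V(2) True by blast
      have "x \<in> N V" unfolding N_def using V(2) s(1) by (intro UN_I[of x]) auto
      then have "x \<in> W' (ch V)" unfolding W'_def using V(1) VK by blast
      moreover have "ch V \<in> I" using ch[OF V(1) VK] by blast
      ultimately show ?thesis by blast
    next
      case False
      have "x \<in> (\<Union>i\<in>I. W i)" using W(2) by simp
      then obtain i where "i \<in> I" "x \<in> W i" by blast
      then show ?thesis using False unfolding W'_def by blast
    qed
    then show "(\<Union>i\<in>I. W' i) = UNIV" by blast
  next
    fix x assume x: "x \<in> cball a \<rho>"
    let ?S = "{V\<in>\<V>. V \<inter> cball x r \<noteq> {}}"
    have S: "finite ?S" "card ?S \<le> k" using \<V>(2) unfolding R_multiplicity_le_def by auto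
    have "{i\<in>I. x \<in> closure (W' i)} \<subseteq> ch ` ?S"
    proof clarify
      fix i assume "x \<in> closure (W' i)"
      moreover have "x \<notin> closure (W i - ?K)"
      proof -
        have "ball a (\<rho> + 1) \<inter> closure (W i - ?K) = {}" by (subst open_Int_closure_eq_empty) auto
        moreover have "x \<in> ball a (\<rho> + 1)" using x by simp
        ultimately show ?thesis by blast
      qed
      ultimately have "x \<in> closure (\<Union>V\<in>{V\<in>\<V>. V \<inter> ?K \<noteq> {} \<and> ch V = i}. \<Union>v\<in>V. ball v s)"
        unfolding W'_def N_def by simp
      from closure_UN_balls_meets_cball[OF this \<open>s < r\<close>]
      obtain V where "V \<in> \<V>" "ch V = i" "V \<inter> cball x r \<noteq> {}" by blast
      then show "i \<in> ch ` ?S" by blast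
    qed
    then have "card {i\<in>I. x \<in> closure (W' i)} \<le> card ?S" by (rule surj_card_le[OF S(1)])
    then show "card {i\<in>I. x \<in> closure (W' i)} \<le> k" using S(2) by linarith
  qed
qed

lemma shrink_open_cover_if_small_covers_near:
  fixes W :: "'i \<Rightarrow> 'a::metric_space set"
  assumes proper: "\<And>x::'a. \<And>r. compact (cball x r)" and "small_covers_near a k"
    and W: "\<And>i. i \<in> I \<Longrightarrow> open (W i)" "(\<Union>i\<in>I. W i) = UNIV"
  shows "\<exists>W'. (\<forall>i\<in>I. open (W' i) \<and> W' i \<subseteq> W i) \<and> (\<Union>i\<in>I. W' i) = UNIV \<and>
    (\<forall>x\<in>cball a \<rho>. card {i\<in>I. x \<in> closure (W' i)} \<le> k)"
proof -
  let ?K = "cball a (\<rho> + 1)"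
  have "?K \<subseteq> \<Union>(W ` I)" using W(2) by simp
  moreover have "\<And>G. G \<in> W ` I \<Longrightarrow> open G" using W(1) by blast
  ultimately obtain e where "0 < e" and e: "\<And>x. x \<in> ?K \<Longrightarrow> \<exists>G\<in>W ` I. ball x e \<subseteq> G"
    using Heine_Borel_lemma[OF proper[of a "\<rho> + 1"]] by blast
  have "0 < e / 2" using \<open>0 < e\<close> by simp
  from \<open>small_covers_near a k\<close>[unfolded small_covers_near_def, rule_format, OF this, of "\<rho> + 1"]
  obtain r and \<V> :: "'a set set" where "0 < r" and \<V>: "\<Union>\<V> = UNIV" "R_multiplicity_le r \<V> k"
    and small: "\<forall>V\<in>\<V>. V \<inter> ?K \<noteq> {} \<longrightarrow> bounded V \<and> diameter V \<le> e / 2"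
    by (elim exE conjE)
  define s where "s = min (r / 2) (e / 4)"
  have fine: "\<exists>i\<in>I. (\<Union>v\<in>V. ball v s) \<subseteq> W i" if V: "V \<in> \<V>" "V \<inter> ?K \<noteq> {}" for V
  proof -
    obtain y where "y \<in> V" "y \<in> ?K" using V(2) by blast
    then obtain i where "i \<in> I" "ball y e \<subseteq> W i" using e by blast
    moreover have "(\<Union>v\<in>V. ball v s) \<subseteq> ball y e"
    proof clarify
      fix v z assume "v \<in> V" "z \<in> ball v s"
      then have "dist y v \<le> e / 2"
        using small V diameter_bounded_bound \<open>y \<in> V\<close> by (meson order_trans)
      then show "z \<in> ball y e"
        using \<open>z \<in> ball v s\<close> dist_triangle[of y z v] \<open>0 < e\<close> by (auto simp: s_def)
    qed
    ultimately show ?thesis by blast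
  qed
  have "0 < s" "s < r" using \<open>0 < r\<close> \<open>0 < e\<close> by (auto simp: s_def)
  from shrink_open_cover_near[OF W \<V> this fine] show ?thesis .
qed

lemma shrinking_sequence_if_small_covers_near:
  fixes W :: "'i \<Rightarrow> 'a::metric_space set" and a :: 'a
  assumes proper: "\<And>x::'a. \<And>r. compact (cball x r)" and "small_covers_near a k"
    and W: "\<And>i. i \<in> I \<Longrightarrow> open (W i)" "(\<Union>i\<in>I. W i) = UNIV"
  shows "\<exists>V. \<forall>n. (\<forall>i\<in>I. open (V n i) \<and> V n i \<subseteq> W i) \<and> (\<Union>i\<in>I. V n i) = UNIV \<and>
    (\<forall>i\<in>I. V (Suc n) i \<subseteq> V n i) \<and> (\<forall>x\<in>cball a (real n). card {i\<in>I. x \<in> closure (V (Suc n) i)} \<le> k)"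
proof -
  define P where "P n V \<longleftrightarrow> (\<forall>i\<in>I. open (V i) \<and> V i \<subseteq> W i) \<and> (\<Union>i\<in>I. V i) = UNIV"
    for n :: nat and V :: "'i \<Rightarrow> 'a set"
  define Q where "Q n V V' \<longleftrightarrow> (\<forall>i\<in>I. V' i \<subseteq> V i) \<and>
      (\<forall>x\<in>cball a (real n). card {i\<in>I. x \<in> closure (V' i)} \<le> k)"
    for n :: nat and V V' :: "'i \<Rightarrow> 'a set"
  have "\<exists>V. \<forall>n. P n (V n) \<and> Q n (V n) (V (Suc n))"
  proof (rule dependent_nat_choice)
    show "\<exists>V. P 0 V" unfolding P_def using W by (intro exI[of _ W]) auto
  next
    fix V n assume "P n V"
    then have "\<exists>V'. (\<forall>i\<in>I. open (V' i) \<and> V' i \<subseteq> V i) \<and> (\<Union>i\<in>I. V' i) = UNIV \<and>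
        (\<forall>x\<in>cball a (real n). card {i\<in>I. x \<in> closure (V' i)} \<le> k)"
      unfolding P_def by (intro shrink_open_cover_if_small_covers_near[OF proper \<open>small_covers_near a k\<close>]) auto
    then obtain V' where V': "\<forall>i\<in>I. open (V' i) \<and> V' i \<subseteq> V i" "(\<Union>i\<in>I. V' i) = UNIV"
      "\<forall>x\<in>cball a (real n). card {i\<in>I. x \<in> closure (V' i)} \<le> k"
      by (elim exE conjE)
    moreover have "\<forall>i\<in>I. V' i \<subseteq> W i" using V'(1) \<open>P n V\<close> unfolding P_def by blast
    ultimately show "\<exists>V'. P (Suc n) V' \<and> Q n V V'" unfolding P_def Q_def by (intro exI[of _ V']) auto
  qed
  then show ?thesis unfolding P_def Q_def conj_assoc .
qed

lemma decseq_finite_nonempty_Inter_nonempty: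
  fixes A :: "nat \<Rightarrow> 'a set"
  assumes "decseq A" and "finite (A 0)" and "\<And>n. A n \<noteq> {}"
  shows "(\<Inter>n. A n) \<noteq> {}"
proof -
  have fin: "finite (A n)" for n using finite_subset[OF decseqD[OF assms(1) le0] assms(2)] .
  obtain N where N: "\<And>m. card (A N) \<le> card (A m)"
    using ex_has_least_nat[of "\<lambda>_. True" 0 "\<lambda>n. card (A n)"] by auto
  have "A N \<subseteq> A m" for m
  proof (cases "m \<le> N")
    case False
    then have "A m \<subseteq> A N" using \<open>decseq A\<close> by (simp add: decseqD)
    then show ?thesis using card_subset_eq[OF fin] N by (metis order_antisym card_mono[OF fin])
  qed (use \<open>decseq A\<close> in \<open>simp add: decseqD\<close>)
  then show ?thesis using assms(3)[of N] by blast
qed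

lemma closed_cover_of_order_le:
  fixes W :: "'i \<Rightarrow> 'a::metric_space set" and a :: 'a
  assumes proper: "\<And>x::'a. \<And>r. compact (cball x r)" and "small_covers_near a k" and "finite I"
    and W: "\<And>i. i \<in> I \<Longrightarrow> open (W i)" "(\<Union>i\<in>I. W i) = UNIV"
  shows "\<exists>E. (\<forall>i. closed (E i)) \<and> (\<Union>i\<in>I. W i \<inter> E i) = UNIV \<and> (\<forall>x. card {i\<in>I. x \<in> E i} \<le> k)"
proof -
  obtain V where V: "\<And>n. (\<forall>i\<in>I. open (V n i) \<and> V n i \<subseteq> W i) \<and> (\<Union>i\<in>I. V n i) = UNIV \<and>
      (\<forall>i\<in>I. V (Suc n) i \<subseteq> V n i) \<and> (\<forall>x\<in>cball a (real n). card {i\<in>I. x \<in> closure (V (Suc n) i)} \<le> k)"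
    using shrinking_sequence_if_small_covers_near[OF proper \<open>small_covers_near a k\<close> W] by blast
  define E where "E i = (\<Inter>n. closure (V n i))" for i
  show ?thesis
  proof (intro exI[of _ E] conjI allI)
    show "closed (E i)" for i unfolding E_def by (simp add: closed_INT)
  next
    fix x
    define n where "n = nat \<lceil>dist a x\<rceil>"
    have "x \<in> cball a (real n)" unfolding n_def by simp
    then have "card {i\<in>I. x \<in> closure (V (Suc n) i)} \<le> k" using V[of n] by blast
    moreover have "{i\<in>I. x \<in> E i} \<subseteq> {i\<in>I. x \<in> closure (V (Suc n) i)}" unfolding E_def by blast
    moreover have "finite {i\<in>I. x \<in> closure (V (Suc n) i)}" using \<open>finite I\<close> by simp
    ultimately show "card {i\<in>I. x \<in> E i} \<le> k" using card_mono le_trans by blast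
  next
    have "x \<in> (\<Union>i\<in>I. W i \<inter> E i)" for x
    proof -
      define A where "A n = {i\<in>I. x \<in> V n i}" for n
      have "decseq A" using V unfolding A_def by (intro decseq_SucI) blast
      moreover have "finite (A 0)" using \<open>finite I\<close> by (simp add: A_def)
      moreover have "A n \<noteq> {}" for n
      proof -
        have "x \<in> (\<Union>i\<in>I. V n i)" using V[of n] by simp
        then show ?thesis by (auto simp: A_def)
      qed
      ultimately obtain i where i: "\<And>n. i \<in> A n"
        using decseq_finite_nonempty_Inter_nonempty[of A] by blast
      then have "i \<in> I" and x: "\<And>n. x \<in> V n i" by (simp_all add: A_def)
      moreover have "V 0 i \<subseteq> W i" using V[of 0] \<open>i \<in> I\<close> by blast
      moreover have "x \<in> E i" unfolding E_def using x closure_subset by blast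
      ultimately show ?thesis by blast
    qed
    then show "(\<Union>i\<in>I. W i \<inter> E i) = UNIV" by blast
  qed
qed

lemma covering_dim_le_if_small_covers_near:
  assumes proper: "\<And>x::'a::metric_space. \<And>r. compact (cball x r)" and "small_covers_near (a::'a) k"
  shows "covering_dim_le (euclidean :: 'a topology) (int k - 1)"
  unfolding covering_dim_le_def
proof (intro allI impI)
  fix \<U> :: "'a set set"
  assume "finite \<U> \<and> (\<forall>U\<in>\<U>. openin euclidean U) \<and> \<Union>\<U> = topspace euclidean"
  then have "finite \<U>" and opn: "\<And>U. U \<in> \<U> \<Longrightarrow> open U" and cover: "(\<Union>U\<in>\<U>. U) = UNIV" by auto
  have "\<exists>E. (\<forall>U. closed (E U)) \<and> (\<Union>U\<in>\<U>. U \<inter> E U) = UNIV \<and> (\<forall>x. card {U\<in>\<U>. x \<in> E U} \<le> k)"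
    using closed_cover_of_order_le[OF proper \<open>small_covers_near a k\<close> \<open>finite \<U>\<close>, of "\<lambda>U. U"] opn cover
    by simp
  then obtain E where E: "\<And>U. closed (E U)" "(\<Union>U\<in>\<U>. U \<inter> E U) = UNIV"
    "\<And>x. card {U\<in>\<U>. x \<in> E U} \<le> k"
    by blast
  have "\<exists>G. (\<forall>U\<in>\<U>. open (G U) \<and> G U \<subseteq> U) \<and> (\<Union>U\<in>\<U>. G U) = UNIV \<and> (\<forall>x. card {U\<in>\<U>. x \<in> G U} \<le> k)"
    by (rule closed_cover_swelling[where U = "\<lambda>U. U"]) (use \<open>finite \<U>\<close> opn E in auto)
  then obtain G where G: "\<And>U. U \<in> \<U> \<Longrightarrow> open (G U) \<and> G U \<subseteq> U" "(\<Union>U\<in>\<U>. G U) = UNIV"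
    and order: "\<And>x. card {U\<in>\<U>. x \<in> G U} \<le> k"
    by blast
  show "\<exists>\<V>. finite \<V> \<and> (\<forall>V\<in>\<V>. openin euclidean V) \<and> \<Union>\<V> = topspace euclidean \<and>
      (\<forall>V\<in>\<V>. \<exists>U\<in>\<U>. V \<subseteq> U) \<and> (\<forall>x\<in>topspace euclidean. int (card {V\<in>\<V>. x \<in> V}) \<le> int k - 1 + 1)"
  proof (intro exI[of _ "G ` \<U>"] conjI ballI)
    show "finite (G ` \<U>)" using \<open>finite \<U>\<close> by simp
    show "\<Union>(G ` \<U>) = topspace euclidean" using G(2) by simp
    fix x
    have "card {V\<in>G ` \<U>. x \<in> V} \<le> card {U\<in>\<U>. x \<in> G U}"
      using \<open>finite \<U>\<close> by (intro surj_card_le) auto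
    then show "int (card {V\<in>G ` \<U>. x \<in> V}) \<le> int k - 1 + 1" using order[of x] by simp
  qed (use G(1) in auto)
qed

theorem proposition3p3:
  fixes k :: nat
  assumes "proper_metric TYPE('a::metric_space)"
    and "admits_dilations TYPE('a)"
    and "uniformly_discrete TYPE('b::metric_space)"
    and "quasi_isometric TYPE('a) TYPE('b)"
    and "\<forall>R>0. \<exists>\<U>::'b set set. \<Union>\<U> = UNIV \<and> radially_sublinear \<U> \<and> R_multiplicity_le R \<U> k"
  shows "ereal (real k) \<ge> dim_top (euclidean :: 'a topology) + 1"
proof -
  have proper: "\<And>x::'a. \<And>r. compact (cball x r)" using assms(1) by (simp add: proper_metric_def)
  obtain \<phi> :: "'a \<Rightarrow> 'a" and c where \<phi>: "bij \<phi>" "0 < c" "c < 1" "\<And>x y. dist (\<phi> x) (\<phi> y) = c * dist x y"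
    using contracting_similarity_if_admits_dilations[OF assms(2)] by blast
  obtain z where "\<phi> z = z"
    using Banach_fix[OF proper_imp_complete[OF proper] UNIV_not_empty less_imp_le[OF \<phi>(2)] \<phi>(3), of \<phi>]
      \<phi>(4) by auto
  from quasi_isometric_pullback_sublinear_cover[OF assms(4,5)]
  obtain \<V> :: "'a set set" where "\<Union>\<V> = UNIV" "radially_sublinear \<V>" "R_multiplicity_le 1 \<V> k"
    by (elim exE conjE)
  then have "small_covers_near z k"
    by (rule small_covers_near_fixed_point[OF \<phi> \<open>\<phi> z = z\<close>])
  then have "covering_dim_le (euclidean :: 'a topology) (int k - 1)"
    by (rule covering_dim_le_if_small_covers_near[OF proper])
  then have "dim_top (euclidean :: 'a topology) \<le> ereal (of_int (int k - 1))"
    unfolding dim_top_def by (intro Inf_lower) blast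
  then have "dim_top (euclidean :: 'a topology) + 1 \<le> ereal (of_int (int k - 1)) + 1"
    by (rule add_right_mono)
  then show ?thesis by simp
qed

end
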